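(* Let $0<s_1<s_2$ and $m\ge1$. The defect capacitance matrix $\mathcal C\in\mathbb R^{(4m+1)\times(4m+1)}$ has at most one eigenvalue in the interval $\Gamma=\big(\frac{2}{s_2},\frac{2}{s_1}\big)$. Moreover, for all $m$ sufficiently large it has exactly one eigenvalue in $\Gamma$.
   Context: Set $\alpha=\frac1{s_1}+\frac1{s_2}$, $\beta_1=-\frac1{s_1}$, $\beta_2=-\frac1{s_2}$, $\eta=\frac2{s_2}$. The defect capacitance matrix $\mathcal C$ ($N=4m+1$) is the real symmetric tridiagonal matrix with diagonal entries $\mathcal C_{11}=\mathcal C_{NN}=\frac1{s_1}$, $\mathcal C_{2m+1,2m+1}=\eta$, $\mathcal C_{ii}=\alpha$ otherwise, and off-diagonal entries $\mathcal C_{i,i+1}=\mathcal C_{i+1,i}$ equal to $\beta_1$ ($i$ odd) and $\beta_2$ ($i$ even) for $1\le i\le 2m$, and $\beta_2$ ($i$ odd) and $\beta_1$ ($i$ even) for $2m+1\le i\le 4m$. It is the capacitance matrix of a chain of $4m+1$ identical resonators with spacings $s_i$ equal to $s_1$ ($i$ odd), $s_2$ ($i$ even) for $i\le 2m$ and $s_2$ ($i$ odd), $s_1$ ($i$ even) for $2m+1\le i\le 4m$. $\Gamma$ is the gap between the two spectral bands of the corresponding infinite periodic dimer chain. *)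

theory Defs
  imports "Jordan_Normal_Form.Matrix" "Jordan_Normal_Form.Jordan_Normal_Form"
begin

text \<open>Entries of the defect capacitance matrix, with the paper's 1-based indices
  i, j in {1..4m+1}.\<close>
definition cap_entry :: "real \<Rightarrow> real \<Rightarrow> nat \<Rightarrow> nat \<Rightarrow> nat \<Rightarrow> real" where
  "cap_entry s1 s2 m i j =
     (let N = 4*m+1; \<alpha> = 1/s1 + 1/s2; \<beta>1 = -1/s1; \<beta>2 = -1/s2; \<eta> = 2/s2 in
      if i = j then
        (if i = 1 \<or> i = N then 1/s1 else if i = 2*m+1 then \<eta> else \<alpha>)
      else if j = i + 1 \<or> i = j + 1 then
        (let k = min i j in
         if k \<le> 2*m then (if odd k then \<beta>1 else \<beta>2)
         else (if odd k then \<beta>2 else \<beta>1))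
      else 0)"

definition defect_cap :: "real \<Rightarrow> real \<Rightarrow> nat \<Rightarrow> real mat" where
  "defect_cap s1 s2 m = mat (4*m+1) (4*m+1) (\<lambda>(i,j). cap_entry s1 s2 m (i+1) (j+1))"

end

theory Submission
  imports Defs
begin

text \<open>Write \<open>a = 1/s1\<close> and \<open>b = 1/s2\<close>, so that the gap is \<open>\<bar>\<lambda> - (a + b)\<bar> < a - b\<close>.
  Away from the defect, the rows of \<open>C - (a + b)\<close> pair up into dimers, and an elementary
  inequality for each dimer sums to \<open>\<parallel>(C - (a + b)) z\<parallel> \<ge> (a - b) \<parallel>z\<parallel>\<close> for every \<open>z\<close>
  vanishing at the defect site. Hence an eigenvector for an eigenvalue in the gap does not vanish
  there, and for two distinct such eigenvalues the combination of their (orthogonal) eigenvectors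
  that vanishes at the defect violates the bound. For existence, solve the eigen-equation from
  the left end by a three-term recurrence and reflect it about the defect: only the defect row
  remains, and once \<open>2 m (a - b) > a\<close> it changes sign across the gap, so the intermediate value
  theorem yields an eigenvalue.\<close>

lemma sum_lessThan_double:
  fixes f :: "nat \<Rightarrow> 'a::comm_monoid_add"
  shows "(\<Sum>i<2*n. f i) = (\<Sum>k<n. f (2*k) + f (2*k+1))"
  by (induction n) (simp_all add: add_ac)

lemma sum_lessThan_reflect_split:
  fixes f :: "nat \<Rightarrow> 'a::comm_monoid_add"
  shows "(\<Sum>i<2*n+1. f i) = (\<Sum>i<n. f i) + f n + (\<Sum>i<n. f (2*n - i))"
proof -
  have "{..<2*n+1} = {..<n} \<union> insert n {n<..2*n}" by auto
  moreover have "(\<Sum>i<n. f (2*n - i)) = (\<Sum>i\<in>{n<..2*n}. f i)"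
    by (rule sum.reindex_bij_witness[where i="\<lambda>i. 2*n - i" and j="\<lambda>i. 2*n - i"]) auto
  moreover have "sum f ({..<n} \<union> {n<..2*n}) = sum f {..<n} + sum f {n<..2*n}"
    by (rule sum.union_disjoint) auto
  ultimately show ?thesis by (simp add: add_ac)
qed

lemma sum_square_orthogonal_diff:
  fixes u v :: "'a \<Rightarrow> real"
  assumes "(\<Sum>i\<in>A. u i * v i) = 0"
  shows "(\<Sum>i\<in>A. (p * u i - q * v i)\<^sup>2) = p\<^sup>2 * (\<Sum>i\<in>A. (u i)\<^sup>2) + q\<^sup>2 * (\<Sum>i\<in>A. (v i)\<^sup>2)"
proof -
  have "(\<Sum>i\<in>A. (p * u i - q * v i)\<^sup>2)
      = (\<Sum>i\<in>A. p\<^sup>2 * (u i)\<^sup>2 - 2*p*q * (u i * v i) + q\<^sup>2 * (v i)\<^sup>2)"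
    by (rule sum.cong) (simp_all add: power2_eq_square algebra_simps)
  also have "\<dots> = p\<^sup>2 * (\<Sum>i\<in>A. (u i)\<^sup>2) - 2*p*q * (\<Sum>i\<in>A. u i * v i) + q\<^sup>2 * (\<Sum>i\<in>A. (v i)\<^sup>2)"
    by (simp add: sum.distrib sum_subtractf sum_distrib_left)
  finally show ?thesis using assms by simp
qed

lemma sum_square_pos:
  fixes x :: "nat \<Rightarrow> real"
  assumes "\<exists>i<n. x i \<noteq> 0"
  shows "0 < (\<Sum>i<n. (x i)\<^sup>2)"
  using assms by (auto intro: sum_pos2)

section \<open>A symmetric operator has at most one eigenvalue in a spectral gap\<close>

lemma eigenfunction_in_gap_nonzero:
  fixes A :: "(nat \<Rightarrow> real) \<Rightarrow> nat \<Rightarrow> real"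
  assumes bound: "\<And>z. z k = 0 \<Longrightarrow> r\<^sup>2 * (\<Sum>i<n. (z i)\<^sup>2) \<le> (\<Sum>i<n. (A z i - c * z i)\<^sup>2)"
    and eigen: "\<forall>i<n. A x i = l * x i" and nonzero: "\<exists>i<n. x i \<noteq> 0"
    and gap: "\<bar>l - c\<bar> < r"
  shows "x k \<noteq> 0"
proof
  assume "x k = 0"
  then have "r\<^sup>2 * (\<Sum>i<n. (x i)\<^sup>2) \<le> (\<Sum>i<n. (A x i - c * x i)\<^sup>2)" by (rule bound)
  also have "\<dots> = (l - c)\<^sup>2 * (\<Sum>i<n. (x i)\<^sup>2)"
    unfolding sum_distrib_left
    by (rule sum.cong) (use eigen in \<open>auto simp: power2_eq_square algebra_simps\<close>)
  finally have "r\<^sup>2 \<le> (l - c)\<^sup>2" using sum_square_pos[OF nonzero] by simp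
  moreover have "(l - c)\<^sup>2 < r\<^sup>2" using gap by (intro power2_strict_mono) simp
  ultimately show False by simp
qed

lemma eigenvalue_in_gap_unique:
  fixes A :: "(nat \<Rightarrow> real) \<Rightarrow> nat \<Rightarrow> real"
  assumes linear: "\<And>x y p q i. A (\<lambda>j. p * x j - q * y j) i = p * A x i - q * A y i"
    and symmetric: "\<And>x y. (\<Sum>i<n. A x i * y i) = (\<Sum>i<n. x i * A y i)"
    and bound: "\<And>z. z k = 0 \<Longrightarrow> r\<^sup>2 * (\<Sum>i<n. (z i)\<^sup>2) \<le> (\<Sum>i<n. (A z i - c * z i)\<^sup>2)"
    and x: "\<forall>i<n. A x i = l * x i" "\<exists>i<n. x i \<noteq> 0" "\<bar>l - c\<bar> < r"
    and y: "\<forall>i<n. A y i = \<mu> * y i" "\<exists>i<n. y i \<noteq> 0" "\<bar>\<mu> - c\<bar> < r"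
  shows "l = \<mu>"
proof (rule ccontr)
  assume "l \<noteq> \<mu>"
  have "l * (\<Sum>i<n. x i * y i) = (\<Sum>i<n. A x i * y i)"
    unfolding sum_distrib_left by (rule sum.cong) (use x in auto)
  also have "\<dots> = (\<Sum>i<n. x i * A y i)" by (rule symmetric)
  also have "\<dots> = \<mu> * (\<Sum>i<n. x i * y i)"
    unfolding sum_distrib_left by (rule sum.cong) (use y in auto)
  finally have orth: "(\<Sum>i<n. x i * y i) = 0" using \<open>l \<noteq> \<mu>\<close> by simp
  define X Y where "X = x k" and "Y = y k"
  have "X \<noteq> 0" unfolding X_def by (rule eigenfunction_in_gap_nonzero[OF bound x])
  have "Y \<noteq> 0" unfolding Y_def by (rule eigenfunction_in_gap_nonzero[OF bound y])
  define Sx Sy where "Sx = (\<Sum>i<n. (x i)\<^sup>2)" and "Sy = (\<Sum>i<n. (y i)\<^sup>2)"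
  have "0 < Sx" unfolding Sx_def using x(2) by (rule sum_square_pos)
  have "0 \<le> Sy" unfolding Sy_def by (simp add: sum_nonneg)
  define z where "z = (\<lambda>j. Y * x j - X * y j)"
  have "z k = 0" unfolding z_def X_def Y_def by simp
  then have "r\<^sup>2 * (\<Sum>i<n. (z i)\<^sup>2) \<le> (\<Sum>i<n. (A z i - c * z i)\<^sup>2)" by (rule bound)
  also have "(\<Sum>i<n. (A z i - c * z i)\<^sup>2)
      = (\<Sum>i<n. ((l - c) * Y * x i - (\<mu> - c) * X * y i)\<^sup>2)"
    unfolding z_def linear by (rule sum.cong) (use x(1) y(1) in \<open>auto simp: algebra_simps\<close>)
  also have "\<dots> = (l - c)\<^sup>2 * (Y\<^sup>2 * Sx) + (\<mu> - c)\<^sup>2 * (X\<^sup>2 * Sy)"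
    using sum_square_orthogonal_diff[OF orth, of "(l - c) * Y" "(\<mu> - c) * X"]
    by (simp add: Sx_def Sy_def power_mult_distrib mult_ac)
  finally have "r\<^sup>2 * (Y\<^sup>2 * Sx + X\<^sup>2 * Sy) \<le> (l - c)\<^sup>2 * (Y\<^sup>2 * Sx) + (\<mu> - c)\<^sup>2 * (X\<^sup>2 * Sy)"
    using sum_square_orthogonal_diff[OF orth, of Y X] by (simp add: z_def Sx_def Sy_def)
  moreover have "(l - c)\<^sup>2 * (Y\<^sup>2 * Sx) < r\<^sup>2 * (Y\<^sup>2 * Sx)"
    using \<open>Y \<noteq> 0\<close> \<open>0 < Sx\<close> x(3) by (intro mult_strict_right_mono power2_strict_mono) auto
  moreover have "(\<mu> - c)\<^sup>2 * (X\<^sup>2 * Sy) \<le> r\<^sup>2 * (X\<^sup>2 * Sy)"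
    using \<open>0 \<le> Sy\<close> y(3) by (intro mult_right_mono power2_strict_mono[THEN less_imp_le]) auto
  ultimately show False by (simp add: algebra_simps)
qed

definition cap_bond :: "real \<Rightarrow> real \<Rightarrow> nat \<Rightarrow> nat \<Rightarrow> real" where
  "cap_bond a b m i = (if i < 2*m then (if even i then a else b) else (if even i then b else a))"

definition cap_coeff :: "real \<Rightarrow> real \<Rightarrow> nat \<Rightarrow> nat \<Rightarrow> nat \<Rightarrow> real" where
  "cap_coeff a b m i j =
     (if i = j then (if i = 0 \<or> i = 4*m then a else if i = 2*m then 2*b else a + b)
      else if j = Suc i then - cap_bond a b m i
      else if i = Suc j then - cap_bond a b m j
      else 0)"

definition cap_apply :: "real \<Rightarrow> real \<Rightarrow> nat \<Rightarrow> (nat \<Rightarrow> real) \<Rightarrow> nat \<Rightarrow> real" where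
  "cap_apply a b m x i = (\<Sum>j<4*m+1. cap_coeff a b m i j * x j)"

lemma cap_entry_Suc_Suc: "cap_entry s1 s2 m (Suc i) (Suc j) = cap_coeff (1/s1) (1/s2) m i j"
  unfolding cap_entry_def cap_coeff_def cap_bond_def Let_def by (auto simp: min_def)

lemma cap_coeff_sym: "cap_coeff a b m i j = cap_coeff a b m j i"
  unfolding cap_coeff_def by auto

lemma cap_apply_tridiagonal:
  assumes "i < 4*m+1"
  shows "cap_apply a b m x i =
    (if 0 < i then - cap_bond a b m (i-1) * x (i-1) else 0) + cap_coeff a b m i i * x i
    + (if i < 4*m then - cap_bond a b m i * x (Suc i) else 0)"
proof -
  let ?l = "if 0 < i then - cap_bond a b m (i-1) * x (i-1) else 0"
    and ?r = "- cap_bond a b m i * x (Suc i)"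
  have "cap_coeff a b m i j * x j =
      (if j = i - 1 then ?l else 0) + (if j = i then cap_coeff a b m i i * x i else 0)
      + (if j = Suc i then ?r else 0)" for j
    unfolding cap_coeff_def by auto
  then have "cap_apply a b m x i = (\<Sum>j<4*m+1. (if j = i - 1 then ?l else 0)
      + (if j = i then cap_coeff a b m i i * x i else 0) + (if j = Suc i then ?r else 0))"
    unfolding cap_apply_def by simp
  also have "\<dots> = (if i - 1 < 4*m+1 then ?l else 0) + (if i < 4*m+1 then cap_coeff a b m i i * x i else 0)
      + (if Suc i < 4*m+1 then ?r else 0)"
    by (simp only: sum.distrib sum.delta finite_lessThan lessThan_iff)
  finally show ?thesis using assms by auto
qed

lemma cap_apply_cong: "(\<And>j. j < 4*m+1 \<Longrightarrow> x j = y j) \<Longrightarrow> cap_apply a b m x i = cap_apply a b m y i"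
  unfolding cap_apply_def by (rule sum.cong) auto

lemma cap_apply_linear:
  "cap_apply a b m (\<lambda>j. p * x j - q * y j) i = p * cap_apply a b m x i - q * cap_apply a b m y i"
  unfolding cap_apply_def by (simp add: sum_subtractf sum_distrib_left algebra_simps)

lemma cap_apply_symmetric:
  "(\<Sum>i<4*m+1. cap_apply a b m x i * y i) = (\<Sum>i<4*m+1. x i * cap_apply a b m y i)"
proof -
  have "(\<Sum>i<4*m+1. cap_apply a b m x i * y i) = (\<Sum>i<4*m+1. \<Sum>j<4*m+1. cap_coeff a b m i j * x j * y i)"
    unfolding cap_apply_def sum_distrib_right ..
  also have "\<dots> = (\<Sum>j<4*m+1. \<Sum>i<4*m+1. cap_coeff a b m i j * x j * y i)" by (rule sum.swap)
  also have "\<dots> = (\<Sum>j<4*m+1. x j * cap_apply a b m y j)"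
    unfolding cap_apply_def sum_distrib_left by (intro sum.cong refl) (simp add: cap_coeff_sym mult_ac)
  finally show ?thesis .
qed

lemma cap_bond_reflect: "j < 4*m \<Longrightarrow> cap_bond a b m (4*m - Suc j) = cap_bond a b m j"
  unfolding cap_bond_def by (auto; presburger)

lemma cap_coeff_diag_reflect: "i \<le> 4*m \<Longrightarrow> cap_coeff a b m (4*m - i) (4*m - i) = cap_coeff a b m i i"
  unfolding cap_coeff_def by auto

lemma cap_apply_reflect:
  assumes "i < 4*m+1"
  shows "cap_apply a b m x (4*m - i) = cap_apply a b m (\<lambda>j. x (4*m - j)) i"
proof -
  have lhs: "cap_apply a b m x (4*m - i) =
      (if 0 < 4*m - i then - cap_bond a b m (4*m - i - 1) * x (4*m - i - 1) else 0)
      + cap_coeff a b m (4*m - i) (4*m - i) * x (4*m - i)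
      + (if 4*m - i < 4*m then - cap_bond a b m (4*m - i) * x (Suc (4*m - i)) else 0)"
    by (rule cap_apply_tridiagonal) (use assms in auto)
  have rhs: "cap_apply a b m (\<lambda>j. x (4*m - j)) i =
      (if 0 < i then - cap_bond a b m (i - 1) * x (4*m - (i - 1)) else 0)
      + cap_coeff a b m i i * x (4*m - i)
      + (if i < 4*m then - cap_bond a b m i * x (4*m - Suc i) else 0)"
    by (rule cap_apply_tridiagonal) (use assms in auto)
  have bond_left: "cap_bond a b m (4*m - i - 1) = cap_bond a b m i" if "i < 4*m"
  proof -
    have "4*m - i - 1 = 4*m - Suc i" by simp
    then show ?thesis using cap_bond_reflect[OF that] by (simp only:)
  qed
  have bond_right: "cap_bond a b m (4*m - i) = cap_bond a b m (i - 1)" if "0 < i"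
  proof -
    have "4*m - Suc (i - 1) = 4*m - i" using that by simp
    then show ?thesis using cap_bond_reflect[of "i - 1" m a b] assms that by simp
  qed
  have diag: "cap_coeff a b m (4*m - i) (4*m - i) = cap_coeff a b m i i"
    using assms by (simp add: cap_coeff_diag_reflect)
  consider "i = 0" | "i = 4*m" | "0 < i" "i < 4*m" using assms by linarith
  then show ?thesis
  proof cases
    case 1
    then show ?thesis unfolding lhs rhs diag using bond_left by simp
  next
    case 2
    then show ?thesis unfolding lhs rhs diag using bond_right by simp
  next
    case 3
    then have "Suc (4*m - i) = 4*m - (i - 1)" "4*m - i - 1 = 4*m - Suc i" by auto
    then show ?thesis unfolding lhs rhs diag using 3 bond_left bond_right by simp
  qed
qed

section \<open>The residual bound off the defect\<close>

text \<open>Row \<open>0\<close> has diagonal \<open>a\<close> instead of \<open>a + b\<close>: relative to the bulk it behaves as if there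
  were a site to its left carrying the value \<open>x 0\<close>, which explains the case \<open>k = 0\<close> below.\<close>

lemma cap_residual_even:
  assumes "k < m"
  shows "cap_apply a b m x (2*k) - (a + b) * x (2*k) = - (b * (if k = 0 then x 0 else x (2*k-1)) + a * x (2*k+1))"
proof -
  have "cap_bond a b m (2*k) = a" "cap_coeff a b m (2*k) (2*k) = (if k = 0 then a else a + b)"
    using assms unfolding cap_bond_def cap_coeff_def by auto
  moreover have "cap_bond a b m (2*k - 1) = b" if "0 < k"
    using assms that unfolding cap_bond_def by (simp add: odd_pos even_diff_nat)
  ultimately show ?thesis
    using assms by (simp add: cap_apply_tridiagonal algebra_simps)
qed

lemma cap_residual_odd:
  assumes "k < m"
  shows "cap_apply a b m x (2*k+1) - (a + b) * x (2*k+1) = - (a * x (2*k) + b * x (2*k+2))"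
proof -
  have "cap_bond a b m (2*k) = a" "cap_bond a b m (2*k+1) = b" "cap_coeff a b m (2*k+1) (2*k+1) = a + b"
    using assms unfolding cap_bond_def cap_coeff_def by auto
  then show ?thesis
    using assms by (simp add: cap_apply_tridiagonal algebra_simps)
qed

lemma dimer_square_bound:
  fixes a b p q :: real
  assumes "0 \<le> b" "b \<le> a"
  shows "a * (a - b) * q\<^sup>2 - b * (a - b) * p\<^sup>2 \<le> (b * p + a * q)\<^sup>2"
proof -
  have "(b * p + a * q)\<^sup>2 - (a * (a - b) * q\<^sup>2 - b * (a - b) * p\<^sup>2) = a * b * (p + q)\<^sup>2"
    by (simp add: power2_eq_square algebra_simps)
  moreover have "0 \<le> a * b * (p + q)\<^sup>2" using assms by simp
  ultimately show ?thesis by linarith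
qed

text \<open>Summing \<open>dimer_square_bound\<close> over the cells telescopes the \<open>b * (a - b)\<close> terms.\<close>

lemma dimer_pairs_bound:
  fixes x :: "nat \<Rightarrow> real"
  assumes "0 \<le> b" "b \<le> a"
  shows "(a - b)\<^sup>2 * (\<Sum>i<2*n. (x i)\<^sup>2) + b * (a - b) * ((if n = 0 then x 0 else x (2*n-1))\<^sup>2 - (x (2*n))\<^sup>2)
     \<le> (\<Sum>k<n. (b * (if k = 0 then x 0 else x (2*k-1)) + a * x (2*k+1))\<^sup>2 + (a * x (2*k) + b * x (2*k+2))\<^sup>2)"
proof (induction n)
  case 0
  then show ?case by simp
next
  case (Suc n)
  let ?p = "if n = 0 then x 0 else x (2*n-1)"
  have "a * (a - b) * (x (2*n+1))\<^sup>2 - b * (a - b) * ?p\<^sup>2 \<le> (b * ?p + a * x (2*n+1))\<^sup>2"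
    using dimer_square_bound[OF assms] by blast
  moreover have "a * (a - b) * (x (2*n))\<^sup>2 - b * (a - b) * (x (2*n+2))\<^sup>2 \<le> (a * x (2*n) + b * x (2*n+2))\<^sup>2"
    using dimer_square_bound[OF assms, of "x (2*n)" "x (2*n+2)"] by (simp add: algebra_simps)
  moreover have "(a - b)\<^sup>2 * (\<Sum>i<2*Suc n. (x i)\<^sup>2) + b * (a - b) * ((x (2*n+1))\<^sup>2 - (x (2*n+2))\<^sup>2)
     = ((a - b)\<^sup>2 * (\<Sum>i<2*n. (x i)\<^sup>2) + b * (a - b) * (?p\<^sup>2 - (x (2*n))\<^sup>2))
       + (a * (a - b) * (x (2*n+1))\<^sup>2 - b * (a - b) * ?p\<^sup>2)
       + (a * (a - b) * (x (2*n))\<^sup>2 - b * (a - b) * (x (2*n+2))\<^sup>2)"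
    by (simp add: power2_eq_square algebra_simps)
  ultimately show ?case using Suc.IH by (simp add: numeral_2_eq_2)
qed

lemma cap_residual_half_bound:
  assumes "0 < b" "b < a" "x (2*m) = 0"
  shows "(a - b)\<^sup>2 * (\<Sum>i<2*m. (x i)\<^sup>2) \<le> (\<Sum>i<2*m. (cap_apply a b m x i - (a + b) * x i)\<^sup>2)"
proof -
  have "(\<Sum>i<2*m. (cap_apply a b m x i - (a + b) * x i)\<^sup>2)
     = (\<Sum>k<m. (b * (if k = 0 then x 0 else x (2*k-1)) + a * x (2*k+1))\<^sup>2 + (a * x (2*k) + b * x (2*k+2))\<^sup>2)"
    unfolding sum_lessThan_double
  proof (rule sum.cong)
    fix k assume "k \<in> {..<m}"
    then have k: "k < m" by simp
    show "(cap_apply a b m x (2*k) - (a + b) * x (2*k))\<^sup>2 + (cap_apply a b m x (2*k+1) - (a + b) * x (2*k+1))\<^sup>2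
      = (b * (if k = 0 then x 0 else x (2*k-1)) + a * x (2*k+1))\<^sup>2 + (a * x (2*k) + b * x (2*k+2))\<^sup>2"
      unfolding cap_residual_even[OF k] cap_residual_odd[OF k] power2_minus ..
  qed simp
  moreover have "0 \<le> b * (a - b) * (if m = 0 then x 0 else x (2*m-1))\<^sup>2" using assms by simp
  moreover have "(a - b)\<^sup>2 * (\<Sum>i<2*m. (x i)\<^sup>2) + b * (a - b) * (if m = 0 then x 0 else x (2*m-1))\<^sup>2
     \<le> (\<Sum>k<m. (b * (if k = 0 then x 0 else x (2*k-1)) + a * x (2*k+1))\<^sup>2 + (a * x (2*k) + b * x (2*k+2))\<^sup>2)"
    using dimer_pairs_bound[of b a x m] assms by simp
  ultimately show ?thesis by linarith
qed

lemma cap_residual_bound: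
  assumes "0 < b" "b < a" "x (2*m) = 0"
  shows "(a - b)\<^sup>2 * (\<Sum>i<4*m+1. (x i)\<^sup>2) \<le> (\<Sum>i<4*m+1. (cap_apply a b m x i - (a + b) * x i)\<^sup>2)"
proof -
  let ?res = "\<lambda>i. (cap_apply a b m x i - (a + b) * x i)\<^sup>2"
  have left: "(a - b)\<^sup>2 * (\<Sum>i<2*m. (x i)\<^sup>2) \<le> (\<Sum>i<2*m. ?res i)"
    using cap_residual_half_bound assms by blast
  have "(a - b)\<^sup>2 * (\<Sum>i<2*m. (x (4*m - i))\<^sup>2)
      \<le> (\<Sum>i<2*m. (cap_apply a b m (\<lambda>j. x (4*m - j)) i - (a + b) * x (4*m - i))\<^sup>2)"
    using cap_residual_half_bound[of b a "\<lambda>j. x (4*m - j)"] assms by simp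
  also have "\<dots> = (\<Sum>i<2*m. ?res (4*m - i))"
    by (rule sum.cong) (simp_all add: cap_apply_reflect)
  finally have right: "(a - b)\<^sup>2 * (\<Sum>i<2*m. (x (4*m - i))\<^sup>2) \<le> (\<Sum>i<2*m. ?res (4*m - i))" .
  have split: "(\<Sum>i<4*m+1. f i) = (\<Sum>i<2*m. f i) + f (2*m) + (\<Sum>i<2*m. f (4*m - i))"
    for f :: "nat \<Rightarrow> real"
    using sum_lessThan_reflect_split[of f "2*m"] by simp
  have "(a - b)\<^sup>2 * (\<Sum>i<4*m+1. (x i)\<^sup>2)
      = (a - b)\<^sup>2 * (\<Sum>i<2*m. (x i)\<^sup>2) + (a - b)\<^sup>2 * (\<Sum>i<2*m. (x (4*m - i))\<^sup>2)"
    unfolding split[of "\<lambda>i. (x i)\<^sup>2"] using assms(3) by (simp add: distrib_left)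
  moreover have "0 \<le> ?res (2*m)" by simp
  ultimately show ?thesis
    unfolding split[of ?res] using left right by linarith
qed

lemma defect_cap_mult_vec_nth:
  assumes "v \<in> carrier_vec (4*m+1)" "i < 4*m+1"
  shows "(defect_cap s1 s2 m *\<^sub>v v) $ i = cap_apply (1/s1) (1/s2) m (\<lambda>j. v $ j) i"
  using assms unfolding defect_cap_def cap_apply_def
  by (simp add: cap_entry_Suc_Suc atLeast0LessThan scalar_prod_def del: sum.lessThan_Suc)

lemma eigenvalue_defect_cap_iff:
  "eigenvalue (defect_cap s1 s2 m) l \<longleftrightarrow>
    (\<exists>x. (\<forall>i<4*m+1. cap_apply (1/s1) (1/s2) m x i = l * x i) \<and> (\<exists>i<4*m+1. x i \<noteq> 0))"
proof
  assume "eigenvalue (defect_cap s1 s2 m) l"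
  then obtain v where v: "v \<in> carrier_vec (4*m+1)" "v \<noteq> 0\<^sub>v (4*m+1)" "defect_cap s1 s2 m *\<^sub>v v = l \<cdot>\<^sub>v v"
    unfolding eigenvalue_def eigenvector_def by (auto simp: defect_cap_def)
  have "cap_apply (1/s1) (1/s2) m (\<lambda>j. v $ j) i = l * v $ i" if "i < 4*m+1" for i
    using arg_cong[OF v(3), of "\<lambda>w. w $ i"] defect_cap_mult_vec_nth[OF v(1) that] that v(1) by simp
  moreover have "\<exists>i<4*m+1. v $ i \<noteq> 0"
  proof (rule ccontr)
    assume "\<not> (\<exists>i<4*m+1. v $ i \<noteq> 0)"
    then have "v = 0\<^sub>v (4*m+1)" using v(1) by (intro eq_vecI) auto
    then show False using v(2) by simp
  qed
  ultimately show "\<exists>x. (\<forall>i<4*m+1. cap_apply (1/s1) (1/s2) m x i = l * x i) \<and> (\<exists>i<4*m+1. x i \<noteq> 0)"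
    by blast
next
  assume "\<exists>x. (\<forall>i<4*m+1. cap_apply (1/s1) (1/s2) m x i = l * x i) \<and> (\<exists>i<4*m+1. x i \<noteq> 0)"
  then obtain x i0 where eigen: "\<forall>i<4*m+1. cap_apply (1/s1) (1/s2) m x i = l * x i"
    and "i0 < 4*m+1" "x i0 \<noteq> 0" by blast
  define v where "v = vec (4*m+1) x"
  have v: "v \<in> carrier_vec (4*m+1)" unfolding v_def by simp
  have "v $ i0 \<noteq> 0" using \<open>i0 < 4*m+1\<close> \<open>x i0 \<noteq> 0\<close> unfolding v_def by simp
  then have "v \<noteq> 0\<^sub>v (4*m+1)" using \<open>i0 < 4*m+1\<close> by auto
  moreover have "defect_cap s1 s2 m *\<^sub>v v = l \<cdot>\<^sub>v v"
  proof (rule eq_vecI)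
    fix i assume "i < dim_vec (l \<cdot>\<^sub>v v)"
    then have i: "i < 4*m+1" unfolding v_def by simp
    have "cap_apply (1/s1) (1/s2) m (\<lambda>j. v $ j) i = cap_apply (1/s1) (1/s2) m x i"
      unfolding v_def by (rule cap_apply_cong) simp
    then show "(defect_cap s1 s2 m *\<^sub>v v) $ i = (l \<cdot>\<^sub>v v) $ i"
      using defect_cap_mult_vec_nth[OF v i] eigen i unfolding v_def by simp
  qed (simp add: defect_cap_def v_def)
  ultimately show "eigenvalue (defect_cap s1 s2 m) l"
    unfolding eigenvalue_def eigenvector_def using v by (auto simp: defect_cap_def)
qed

lemma defect_cap_gap_eigenvalue_unique:
  assumes "0 < s1" "s1 < s2"
    and "eigenvalue (defect_cap s1 s2 m) l" "l \<in> {2/s2<..<2/s1}"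
    and "eigenvalue (defect_cap s1 s2 m) \<mu>" "\<mu> \<in> {2/s2<..<2/s1}"
  shows "l = \<mu>"
proof -
  define a b where "a = 1/s1" and "b = 1/s2"
  have "0 < b" "b < a" unfolding a_def b_def using assms(1,2) by (simp_all add: frac_less2)
  have gap: "\<bar>t - (a + b)\<bar> < a - b" if "t \<in> {2/s2<..<2/s1}" for t
    using that unfolding a_def b_def by auto
  obtain x where x: "\<forall>i<4*m+1. cap_apply a b m x i = l * x i" "\<exists>i<4*m+1. x i \<noteq> 0"
    using assms(3) unfolding eigenvalue_defect_cap_iff a_def b_def by blast
  obtain y where y: "\<forall>i<4*m+1. cap_apply a b m y i = \<mu> * y i" "\<exists>i<4*m+1. y i \<noteq> 0"
    using assms(5) unfolding eigenvalue_defect_cap_iff a_def b_def by blast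
  show ?thesis
    using cap_apply_linear cap_apply_symmetric cap_residual_bound[OF \<open>0 < b\<close> \<open>b < a\<close>]
    by (rule eigenvalue_in_gap_unique[OF _ _ _ x gap[OF assms(4)] y gap[OF assms(6)]])
qed

section \<open>Existence of a defect eigenvalue\<close>

text \<open>\<open>transfer a b l (Suc j)\<close> is the value at site \<open>j\<close> of the solution of rows \<open>0, \<dots>, 2*m - 1\<close> of
  the eigen-equation normalised by \<open>v 0 = 1\<close>; \<open>transfer a b l 0\<close> is the ghost site to the left of
  row \<open>0\<close>. An eigenvector symmetric about the defect exists iff the remaining row \<open>2*m\<close> holds.\<close>

definition transfer_weight :: "real \<Rightarrow> real \<Rightarrow> nat \<Rightarrow> real" where
  "transfer_weight a b n = (if odd n then a else b)"

fun transfer :: "real \<Rightarrow> real \<Rightarrow> real \<Rightarrow> nat \<Rightarrow> real" where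
  "transfer a b l 0 = 1"
| "transfer a b l (Suc 0) = 1"
| "transfer a b l (Suc (Suc n)) =
     ((a + b - l) * transfer a b l (Suc n) - transfer_weight a b n * transfer a b l n) / transfer_weight a b (Suc n)"

lemma transfer_weight_pos: "0 < a \<Longrightarrow> 0 < b \<Longrightarrow> 0 < transfer_weight a b n"
  unfolding transfer_weight_def by auto

lemma transfer_recurrence:
  assumes "0 < a" "0 < b"
  shows "transfer_weight a b (Suc n) * transfer a b l (Suc (Suc n))
    = (a + b - l) * transfer a b l (Suc n) - transfer_weight a b n * transfer a b l n"
  using transfer_weight_pos[OF assms, of "Suc n"] by simp

lemma continuous_on_transfer:
  assumes "0 < a" "0 < b"
  shows "continuous_on S (\<lambda>l. transfer a b l n)"
proof -
  have "continuous_on S (\<lambda>l. transfer a b l n) \<and> continuous_on S (\<lambda>l. transfer a b l (Suc n))"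
  proof (induction n)
    case 0
    then show ?case by simp
  next
    case (Suc n)
    then have "continuous_on S (\<lambda>l. ((a + b - l) * transfer a b l (Suc n) - transfer_weight a b n * transfer a b l n)
        / transfer_weight a b (Suc n))"
      using transfer_weight_pos[OF assms, of "Suc n"] by (intro continuous_intros) auto
    then show ?case using Suc by simp
  qed
  then show ?thesis by blast
qed

lemma transfer_even_odd:
  "transfer a b l (2*Suc k) = ((a + b - l) * transfer a b l (2*k+1) - b * transfer a b l (2*k)) / a"
  "transfer a b l (2*Suc k+1) = ((a + b - l) * transfer a b l (2*Suc k) - a * transfer a b l (2*k+1)) / b"
proof -
  have w: "transfer_weight a b (2*k) = b" "transfer_weight a b (2*k+1) = a" "transfer_weight a b (2*k+2) = b"
    unfolding transfer_weight_def by auto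
  have "transfer a b l (2*Suc k) = ((a + b - l) * transfer a b l (2*k+1)
      - transfer_weight a b (2*k) * transfer a b l (2*k)) / transfer_weight a b (2*k+1)"
    by (simp add: numeral_2_eq_2)
  moreover have "transfer a b l (2*Suc k+1) = ((a + b - l) * transfer a b l (2*Suc k)
      - transfer_weight a b (2*k+1) * transfer a b l (2*k+1)) / transfer_weight a b (2*k+2)"
    by (simp add: numeral_2_eq_2)
  ultimately show "transfer a b l (2*Suc k) = ((a + b - l) * transfer a b l (2*k+1) - b * transfer a b l (2*k)) / a"
    "transfer a b l (2*Suc k+1) = ((a + b - l) * transfer a b l (2*Suc k) - a * transfer a b l (2*k+1)) / b"
    unfolding w by simp_all
qed

lemma transfer_at_upper_edge:
  assumes "0 < a" "0 < b"
  shows "transfer a b (2*a) (2*k) = (-1)^k \<and> transfer a b (2*a) (2*k+1) = (-1)^k"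
proof (induction k)
  case 0
  then show ?case by simp
next
  case (Suc k)
  then have p: "transfer a b (2*a) (2*k) = (-1)^k" and q: "transfer a b (2*a) (2*k+1) = (-1)^k" by auto
  have even: "transfer a b (2*a) (2*Suc k) = (-1)^Suc k"
    unfolding transfer_even_odd(1) p q using assms by (simp add: field_simps)
  moreover have "transfer a b (2*a) (2*Suc k+1) = (-1)^Suc k"
    unfolding transfer_even_odd(2) even q using assms by (simp add: field_simps)
  ultimately show ?case by simp
qed

lemma transfer_at_lower_edge:
  assumes "0 < a" "0 < b"
  shows "transfer a b (2*b) (2*k) = (-1)^k * (1 - 2*k*((a - b)/a))
    \<and> transfer a b (2*b) (2*k+1) = (-1)^k * (1 + 2*k*((a - b)/a))"
proof (induction k)
  case 0
  then show ?case by simp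
next
  case (Suc k)
  then have p: "transfer a b (2*b) (2*k) = (-1)^k * (1 - 2*k*((a - b)/a))"
    and q: "transfer a b (2*b) (2*k+1) = (-1)^k * (1 + 2*k*((a - b)/a))" by auto
  have even: "transfer a b (2*b) (2*Suc k) = (-1)^Suc k * (1 - 2*(Suc k)*((a - b)/a))"
    unfolding transfer_even_odd(1) p q using assms by (simp add: field_simps)
  moreover have "transfer a b (2*b) (2*Suc k+1) = (-1)^Suc k * (1 + 2*(Suc k)*((a - b)/a))"
    unfolding transfer_even_odd(2) even q using assms by (simp add: field_simps)
  ultimately show ?case by simp
qed

definition mirrored_transfer :: "real \<Rightarrow> real \<Rightarrow> nat \<Rightarrow> real \<Rightarrow> nat \<Rightarrow> real" where
  "mirrored_transfer a b m l j = (if j \<le> 2*m then transfer a b l (Suc j) else transfer a b l (4*m+1-j))"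

lemma mirrored_transfer_reflect: "j \<le> 4*m \<Longrightarrow> mirrored_transfer a b m l (4*m - j) = mirrored_transfer a b m l j"
  unfolding mirrored_transfer_def by (cases "j = 2*m") (auto simp: Suc_diff_le)

lemma mirrored_transfer_eigen_left:
  assumes "0 < b" "b < a" "1 \<le> m" "i \<le> 2*m"
    and centre: "(2*b - l) * transfer a b l (2*m+1) = 2*b * transfer a b l (2*m)"
  shows "cap_apply a b m (mirrored_transfer a b m l) i = l * mirrored_transfer a b m l i"
proof -
  have "0 < a" using assms by simp
  let ?v = "mirrored_transfer a b m l"
  consider "i = 0" | "0 < i" "i < 2*m" | "i = 2*m" using assms(4) by linarith
  then show ?thesis
  proof cases
    case 1
    have "cap_coeff a b m 0 0 = a" "cap_bond a b m 0 = a" using assms unfolding cap_coeff_def cap_bond_def by auto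
    moreover have "?v 0 = 1" "?v 1 = transfer a b l 2"
      using assms unfolding mirrored_transfer_def by (auto simp: numeral_2_eq_2)
    moreover have "a * transfer a b l 2 = a - l"
      using transfer_recurrence[OF \<open>0 < a\<close> \<open>0 < b\<close>, of 0 l] by (simp add: transfer_weight_def numeral_2_eq_2)
    ultimately show ?thesis using 1 assms by (simp add: cap_apply_tridiagonal algebra_simps)
  next
    case 2
    have "cap_bond a b m (i-1) = transfer_weight a b i" "cap_bond a b m i = transfer_weight a b (Suc i)"
      "cap_coeff a b m i i = a + b"
      using 2 unfolding cap_bond_def transfer_weight_def cap_coeff_def by auto
    moreover have "?v (i-1) = transfer a b l i" "?v i = transfer a b l (Suc i)" "?v (Suc i) = transfer a b l (Suc (Suc i))"
      using 2 unfolding mirrored_transfer_def by auto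
    ultimately show ?thesis
      using 2 transfer_recurrence[OF \<open>0 < a\<close> \<open>0 < b\<close>, of i l]
      by (simp add: cap_apply_tridiagonal algebra_simps del: transfer.simps)
  next
    case 3
    have "cap_bond a b m (i-1) = b" "cap_bond a b m i = b" "cap_coeff a b m i i = 2*b"
      using 3 assms unfolding cap_bond_def cap_coeff_def by auto
    moreover have "?v (i-1) = transfer a b l (2*m)" "?v i = transfer a b l (2*m+1)" "?v (Suc i) = transfer a b l (2*m)"
      using 3 assms unfolding mirrored_transfer_def by auto
    ultimately show ?thesis using 3 assms centre by (simp add: cap_apply_tridiagonal algebra_simps)
  qed
qed

lemma mirrored_transfer_eigen:
  assumes "0 < b" "b < a" "1 \<le> m" "i < 4*m+1"
    and centre: "(2*b - l) * transfer a b l (2*m+1) = 2*b * transfer a b l (2*m)"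
  shows "cap_apply a b m (mirrored_transfer a b m l) i = l * mirrored_transfer a b m l i"
proof (cases "i \<le> 2*m")
  case True
  then show ?thesis using mirrored_transfer_eigen_left[OF assms(1-3) _ centre] by blast
next
  case False
  let ?v = "mirrored_transfer a b m l"
  define i' where "i' = 4*m - i"
  have i': "i' \<le> 2*m" "i = 4*m - i'" using False assms(4) unfolding i'_def by auto
  have "cap_apply a b m ?v i = cap_apply a b m (\<lambda>j. ?v (4*m - j)) i'"
    unfolding i'(2) by (rule cap_apply_reflect) (use i' in auto)
  also have "\<dots> = cap_apply a b m ?v i'" by (rule cap_apply_cong) (simp add: mirrored_transfer_reflect)
  also have "\<dots> = l * ?v i'" using mirrored_transfer_eigen_left[OF assms(1-3) i'(1) centre] .
  also have "\<dots> = l * ?v i" using mirrored_transfer_reflect[of i' m a b l] i' by simp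
  finally show ?thesis .
qed

text \<open>The defect row, multiplied by \<open>(-1)^m\<close>, changes sign across the gap: it equals \<open>-2*a\<close>
  at \<open>l = 2*a\<close> and \<open>2*b*(2*m*(a-b)/a - 1)\<close> at \<open>l = 2*b\<close>.\<close>

lemma centre_condition_root_in_gap:
  assumes "0 < b" "b < a" "a < 2 * real m * (a - b)"
  shows "\<exists>l. 2*b < l \<and> l < 2*a \<and> (2*b - l) * transfer a b l (2*m+1) = 2*b * transfer a b l (2*m)"
proof -
  have "0 < a" using assms by simp
  define g where "g = (\<lambda>l. (-1)^m * ((2*b - l) * transfer a b l (2*m+1) - 2*b * transfer a b l (2*m)))"
  have sign: "(-1::real)^m * (-1)^m = 1" by (simp flip: power_add)
  have upper_values: "transfer a b (2*a) (2*m) = (-1)^m" "transfer a b (2*a) (2*m+1) = (-1)^m"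
    using transfer_at_upper_edge[OF \<open>0 < a\<close> \<open>0 < b\<close>] by auto
  have "g (2*a) = -2*a * ((-1)^m * (-1)^m)" unfolding g_def upper_values by (simp add: algebra_simps)
  then have upper: "g (2*a) < 0" using sign \<open>0 < a\<close> by simp
  have lower_value: "transfer a b (2*b) (2*m) = (-1)^m * (1 - 2 * real m * ((a - b)/a))"
    using transfer_at_lower_edge[OF \<open>0 < a\<close> \<open>0 < b\<close>] by blast
  have "g (2*b) = 2*b * (2 * real m * ((a - b)/a) - 1) * ((-1)^m * (-1)^m)"
    unfolding g_def lower_value by (simp add: algebra_simps)
  moreover have "1 < 2 * real m * ((a - b)/a)" using assms \<open>0 < a\<close> by (simp add: field_simps)
  ultimately have lower: "0 < g (2*b)" using sign assms(1) by simp
  have "continuous_on {2*b..2*a} g"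
    unfolding g_def using continuous_on_transfer[OF \<open>0 < a\<close> \<open>0 < b\<close>]
    by (intro continuous_intros) auto
  then obtain l where l: "2*b \<le> l" "l \<le> 2*a" "g l = 0"
    using IVT2'[of g "2*a" 0 "2*b"] upper lower assms by force
  then have "2*b < l" "l < 2*a" using upper lower by (auto simp: le_less)
  moreover have "(2*b - l) * transfer a b l (2*m+1) = 2*b * transfer a b l (2*m)"
    using l(3) unfolding g_def by simp
  ultimately show ?thesis by blast
qed

lemma defect_cap_gap_eigenvalue_exists:
  assumes "0 < s1" "s1 < s2" "s2 < 2 * real m * (s2 - s1)"
  shows "\<exists>l \<in> {2/s2<..<2/s1}. eigenvalue (defect_cap s1 s2 m) l"
proof -
  define a b where "a = 1/s1" and "b = 1/s2"
  have "0 < b" "b < a" unfolding a_def b_def using assms(1,2) by (simp_all add: frac_less2)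
  have "a = s2 / (s1 * s2)" unfolding a_def using assms(1,2) by simp
  also have "\<dots> < 2 * real m * (s2 - s1) / (s1 * s2)"
    using assms by (intro divide_strict_right_mono) auto
  also have "\<dots> = 2 * real m * (a - b)" unfolding a_def b_def using assms(1,2) by (simp add: field_simps)
  finally have "a < 2 * real m * (a - b)" .
  then obtain l where l: "2*b < l" "l < 2*a"
    and centre: "(2*b - l) * transfer a b l (2*m+1) = 2*b * transfer a b l (2*m)"
    using centre_condition_root_in_gap[OF \<open>0 < b\<close> \<open>b < a\<close>] by blast
  have "1 \<le> m" using assms by (cases m) auto
  have "\<forall>i<4*m+1. cap_apply a b m (mirrored_transfer a b m l) i = l * mirrored_transfer a b m l i"
    using mirrored_transfer_eigen[OF \<open>0 < b\<close> \<open>b < a\<close> \<open>1 \<le> m\<close> _ centre] by blast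
  moreover have "mirrored_transfer a b m l 0 = 1" unfolding mirrored_transfer_def by simp
  ultimately have "\<exists>x. (\<forall>i<4*m+1. cap_apply a b m x i = l * x i) \<and> (\<exists>i<4*m+1. x i \<noteq> 0)"
    by fastforce
  then have "eigenvalue (defect_cap s1 s2 m) l"
    unfolding eigenvalue_defect_cap_iff a_def b_def .
  moreover have "l \<in> {2/s2<..<2/s1}" using l unfolding a_def b_def by simp
  ultimately show ?thesis by blast
qed

theorem mainTheorem7:
  fixes s1 s2 :: real
  assumes "0 < s1" and "s1 < s2"
  shows "(\<forall>m\<ge>1. card {ev. eigenvalue (defect_cap s1 s2 m) ev \<and> ev \<in> {2/s2<..<2/s1}} \<le> 1)
       \<and> (\<exists>M. \<forall>m\<ge>M. card {ev. eigenvalue (defect_cap s1 s2 m) ev \<and> ev \<in> {2/s2<..<2/s1}} = 1)"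
proof -
  let ?S = "\<lambda>m. {ev. eigenvalue (defect_cap s1 s2 m) ev \<and> ev \<in> {2/s2<..<2/s1}}"
  have unique: "l = \<mu>" if "l \<in> ?S m" "\<mu> \<in> ?S m" for m l \<mu>
    using defect_cap_gap_eigenvalue_unique[OF assms] that by blast
  have at_most_one: "card (?S m) \<le> 1" for m
    using unique by (cases "finite (?S m)") (auto simp: card_le_Suc0_iff_eq)
  define M where "M = nat \<lceil>s2 / (2*(s2 - s1))\<rceil> + 1"
  have exactly_one: "card (?S m) = 1" if "M \<le> m" for m
  proof -
    have "s2 / (2*(s2 - s1)) < m" using that unfolding M_def by linarith
    then have "s2 < 2 * real m * (s2 - s1)" using assms by (simp add: field_simps)
    then obtain l where "l \<in> ?S m" using defect_cap_gap_eigenvalue_exists[OF assms] by blast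
    then have "?S m = {l}" using unique by blast
    then show ?thesis by simp
  qed
  show ?thesis using at_most_one exactly_one by blast
qed

end
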